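(* Let $G$ be a torsion-free group, $n\in\mathbb N$, and $m>(n-1)^2$ an integer. Then for every cubic function $f:2^m\to G$ we have $|f(2^m)|>n$.
   Context: $2^m=\{0,1\}^m$. For $\mathbf g=(g_1,\dots,g_m)\in(G\setminus\{e\})^m$ and $\mathbf x=(x_1,\dots,x_m)\in 2^m$ put $\mathbf g^{\mathbf x}=g_1^{x_1}\cdots g_m^{x_m}$. A function $f:2^m\to G$ is cubic if there is $\mathbf g\in(G\setminus\{e\})^m$ with $f(\mathbf x)=\mathbf g^{\mathbf x}$ for all $\mathbf x\in 2^m$. A group is torsion-free if every non-neutral element has infinite order. *)

theory Defs
  imports "HOL-Algebra.Group"
begin

definition cube_points :: "nat \<Rightarrow> nat list set" where
  "cube_points m = {xs. length xs = m \<and> set xs \<subseteq> {0, 1}}"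

definition cube_prod :: "('a, 'b) monoid_scheme \<Rightarrow> 'a list \<Rightarrow> nat list \<Rightarrow> 'a" where
  "cube_prod G gs xs = foldr (\<lambda>(g, x) acc. (g [^]\<^bsub>G\<^esub> x) \<otimes>\<^bsub>G\<^esub> acc) (zip gs xs) \<one>\<^bsub>G\<^esub>"

definition cubic :: "('a, 'b) monoid_scheme \<Rightarrow> nat \<Rightarrow> (nat list \<Rightarrow> 'a) \<Rightarrow> bool" where
  "cubic G m f \<longleftrightarrow> (\<exists>gs. length gs = m \<and> set gs \<subseteq> carrier G - {\<one>\<^bsub>G\<^esub>} \<and>
      (\<forall>xs\<in>cube_points m. f xs = cube_prod G gs xs))"

definition torsion_free :: "('a, 'b) monoid_scheme \<Rightarrow> bool" where
  "torsion_free G \<longleftrightarrow> (\<forall>x\<in>carrier G. x \<noteq> \<one>\<^bsub>G\<^esub> \<longrightarrow> (\<forall>k::nat. k > 0 \<longrightarrow> x [^]\<^bsub>G\<^esub> k \<noteq> \<one>\<^bsub>G\<^esub>))"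

end

theory Submission
  imports Defs
begin

text \<open>
  Write the cubic function as f(x) = g_1^x_1 \<cdots> g_m^x_m with all g_i \<noteq> 1.
  Peeling off the first factor, the image of the cube on (g_1, ..., g_m) is S \<union> g_1 S,
  where S is the image of the cube on (g_2, ..., g_m).  In a torsion-free group no
  finite nonempty set is mapped into itself by left multiplication with g \<noteq> 1 (its
  orbit {g^k a} would be infinite), so g_1 S \<noteq> S and the image gains at least one new
  point.  By induction, the image of the m-cube has at least m + 1 points.  Finally
  m > (n - 1)^2 \<ge> n - 1 forces m \<ge> n, hence the image has more than n points.
\<close>

lemma cube_points_Suc:
  "cube_points (Suc k) = (\<lambda>xs. 0 # xs) ` cube_points k \<union> (\<lambda>xs. 1 # xs) ` cube_points k"
proof
  show "cube_points (Suc k) \<subseteq> (\<lambda>xs. 0 # xs) ` cube_points k \<union> (\<lambda>xs. 1 # xs) ` cube_points k"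
  proof
    fix ys assume "ys \<in> cube_points (Suc k)"
    then obtain x xs where "ys = x # xs" "x \<in> {0, 1}" "xs \<in> cube_points k"
      by (cases ys) (auto simp: cube_points_def)
    then show "ys \<in> (\<lambda>xs. 0 # xs) ` cube_points k \<union> (\<lambda>xs. 1 # xs) ` cube_points k"
      by auto
  qed
qed (auto simp: cube_points_def)

lemma finite_cube_points: "finite (cube_points m)"
proof -
  have "cube_points m \<subseteq> {xs. set xs \<subseteq> {0, 1} \<and> length xs = m}"
    by (auto simp: cube_points_def)
  then show ?thesis
    using finite_lists_length_eq[of "{0, 1 :: nat}" m] finite_subset by blast
qed

lemma cube_prod_Cons:
  "cube_prod G (g # gs) (x # xs) = (g [^]\<^bsub>G\<^esub> x) \<otimes>\<^bsub>G\<^esub> cube_prod G gs xs"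
  by (simp add: cube_prod_def)

lemma (in group) cube_prod_closed:
  assumes "set gs \<subseteq> carrier G"
  shows "cube_prod G gs xs \<in> carrier G"
  using assms
proof (induction gs arbitrary: xs)
  case Nil
  then show ?case by (simp add: cube_prod_def)
next
  case (Cons g gs)
  then show ?case
    by (cases xs) (auto simp: cube_prod_def cube_prod_Cons[symmetric])
qed

lemma (in group) cube_image_Cons:
  assumes "g \<in> carrier G" "set gs \<subseteq> carrier G"
  defines "S \<equiv> cube_prod G gs ` cube_points (length gs)"
  shows "cube_prod G (g # gs) ` cube_points (length (g # gs)) = S \<union> (\<lambda>y. g \<otimes> y) ` S"
proof -
  have "cube_prod G (g # gs) (0 # xs) = cube_prod G gs xs" for xs
    using cube_prod_closed[OF assms(2)] by (simp add: cube_prod_Cons)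
  moreover have "cube_prod G (g # gs) (1 # xs) = g \<otimes> cube_prod G gs xs" for xs
    using assms(1) cube_prod_closed[OF assms(2)] by (simp add: cube_prod_Cons)
  ultimately show ?thesis
    unfolding S_def by (simp add: cube_points_Suc image_Un image_image)
qed

lemma (in group) torsion_free_pow_inj:
  assumes tf: "torsion_free G" and g: "g \<in> carrier G" "g \<noteq> \<one>"
  shows "inj (\<lambda>k :: nat. g [^] k)"
proof (rule injI)
  fix i j :: nat
  assume eq: "g [^] i = g [^] j"
  have "g [^] (i - j) = \<one>" "g [^] (j - i) = \<one>"
    using pow_eq_div2[OF g(1) eq] pow_eq_div2[OF g(1) eq[symmetric]] by auto
  then show "i = j"
    using tf g unfolding torsion_free_def by (metis diff_is_0_eq le_antisym neq0_conv)
qed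

text \<open>
  Left multiplication by g \<noteq> 1 in a torsion-free group maps no finite nonempty set
  into itself: otherwise the infinite orbit {g^k a} of a point a would lie in the set.
\<close>
lemma (in group) translate_not_subset:
  assumes tf: "torsion_free G" and g: "g \<in> carrier G" "g \<noteq> \<one>"
    and A: "finite A" "A \<subseteq> carrier G" "a \<in> A"
  shows "\<not> (\<lambda>y. g \<otimes> y) ` A \<subseteq> A"
proof
  assume sub: "(\<lambda>y. g \<otimes> y) ` A \<subseteq> A"
  have a: "a \<in> carrier G" using A by auto
  have orbit_in_A: "g [^] k \<otimes> a \<in> A" for k :: nat
  proof (induction k)
    case 0
    then show ?case using A a by simp
  next
    case (Suc k)
    have "g [^] Suc k \<otimes> a = g \<otimes> (g [^] k \<otimes> a)"
      using g a by (metis nat_pow_Suc2 m_assoc nat_pow_closed)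
    then show ?case using sub Suc by auto
  qed
  have "inj (\<lambda>k :: nat. g [^] k \<otimes> a)"
    using torsion_free_pow_inj[OF tf g] g a by (auto simp: inj_def right_cancel)
  then have "infinite (range (\<lambda>k :: nat. g [^] k \<otimes> a))"
    using finite_imageD infinite_UNIV_nat by blast
  moreover have "range (\<lambda>k :: nat. g [^] k \<otimes> a) \<subseteq> A"
    using orbit_in_A by auto
  ultimately show False
    using A(1) finite_subset by blast
qed

lemma (in group) card_cube_image:
  assumes tf: "torsion_free G" and gs: "set gs \<subseteq> carrier G - {\<one>}"
  shows "length gs + 1 \<le> card (cube_prod G gs ` cube_points (length gs))"
  using gs
proof (induction gs)
  case Nil
  have "cube_points 0 = {[]}"
    by (auto simp: cube_points_def)
  then show ?case by simp
next
  case (Cons g gs)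
  define S where "S = cube_prod G gs ` cube_points (length gs)"
  have g: "g \<in> carrier G" "g \<noteq> \<one>" and gs: "set gs \<subseteq> carrier G"
    using Cons.prems by auto
  have S: "finite S" "S \<subseteq> carrier G"
    using finite_cube_points cube_prod_closed[OF gs] unfolding S_def by auto
  have card_S: "length gs + 1 \<le> card S"
    using Cons unfolding S_def by auto
  then obtain a where "a \<in> S"
    by fastforce
  then have "S \<subset> S \<union> (\<lambda>y. g \<otimes> y) ` S"
    using translate_not_subset[OF tf g S] by auto
  then have "card S < card (S \<union> (\<lambda>y. g \<otimes> y) ` S)"
    using S(1) by (intro psubset_card_mono) auto
  then show ?case
    using card_S cube_image_Cons[OF g(1) gs] unfolding S_def by simp
qed

lemma le_of_square_less:
  fixes n m :: nat
  assumes "(int n - 1)^2 < int m"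
  shows "n \<le> m"
proof -
  have "int n - 1 \<le> (int n - 1)^2"
    by (smt (verit) power2_eq_square mult_le_cancel_left1)
  then show ?thesis using assms by linarith
qed

theorem lemma4p1:
  fixes G :: "('a, 'b) monoid_scheme" and n m :: nat and f :: "nat list \<Rightarrow> 'a"
  assumes "group G" and "torsion_free G"
    and "int m > (int n - 1)^2"
    and "cubic G m f"
  shows "card (f ` cube_points m) > n"
proof -
  interpret group G by (rule assms(1))
  obtain gs where gs: "length gs = m" "set gs \<subseteq> carrier G - {\<one>\<^bsub>G\<^esub>}"
    and f: "\<forall>xs\<in>cube_points m. f xs = cube_prod G gs xs"
    using assms(4) unfolding cubic_def by blast
  have "f ` cube_points m = cube_prod G gs ` cube_points (length gs)"
    using gs(1) f by (auto intro!: image_cong)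
  then have "m + 1 \<le> card (f ` cube_points m)"
    using card_cube_image[OF assms(2) gs(2)] gs(1) by simp
  then show ?thesis
    using le_of_square_less[OF assms(3)] by linarith
qed

end
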